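(* Let $f=\sum_{i=1}^N \lambda_i f_i$ be convex and $L$-smooth in the sense below, let $w^*$ be a minimizer of $f$, and let $\eta>0$. Let $(w^t)_{t\ge 1}$ be generated by the asynchronous aggregation rule $$w^{t+1}=w^t-\eta\sum_{i\in\mathcal{I}_t}\lambda_i\nabla f_i\big(w^{t-\tau_i(t)}\big),$$ and define the asynchronous error $e(t)=\nabla f(w^t)-\sum_{i\in\mathcal{I}_t}\lambda_i\nabla f_i(w^{t-\tau_i(t)})$. Then for every $T\ge 1$, $$\sum_{t=1}^{T}\big[f(w^{t+1})-f(w^* )\big]\le \frac{1}{2\eta}\big(\|w^1-w^*\|^2-\|w^{T+1}-w^*\|^2\big)+\sum_{t=1}^{T}\langle e(t),w^{t+1}-w^*\rangle+\frac12\Big(L-\frac1\eta\Big)\sum_{t=1}^{T}\|w^{t+1}-w^t\|^2 .$$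
   Context: There are $N$ clients indexed by $i=1,\dots,N$, each with a differentiable local loss $f_i:\mathbb{R}^d\to\mathbb{R}$, and weights $\lambda_i\ge 0$ with $\sum_{i=1}^N\lambda_i=1$; the global loss is $f=\sum_{i=1}^N\lambda_i f_i$. Each $f_i$ satisfies, for all $w_1,w_2$: (smoothness) $f_i(w_1)-f_i(w_2)\le\langle\nabla f_i(w_2),w_1-w_2\rangle+\frac L2\|w_1-w_2\|^2$, and (convexity) $f_i(w_1)-f_i(w_2)\ge\langle\nabla f_i(w_2),w_1-w_2\rangle+\frac\mu2\|w_1-w_2\|^2$ with $\mu\ge 0$; hence $f$ satisfies the same two inequalities. $w^1$ is the initial parameter. For each iteration $t$, $\mathcal{I}_t\subseteq\{1,\dots,N\}$ is the set of clients that successfully send updates to the server at iteration $t$, and $\tau_i(t)$ is a nonnegative integer with $t-\tau_i(t)\ge 1$, the delay of client $i$ at iteration $t$ (so client $i$'s gradient used at iteration $t$ is computed at the global parameter $w^{t-\tau_i(t)}$ it received earlier). *)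

theory Defs
  imports "HOL-Analysis.Analysis"
begin

end

theory Submission
  imports Defs
begin

(* Smoothness bounds f(w(t+1)) - f(w(t)) and convexity bounds f(w(t)) - f(wstar) by inner
   products with the true gradient at w(t). Writing that gradient as the applied direction
   (w(t) - w(t+1)) / eta plus the error e(t), the polarization identity turns the inner product
   with the applied direction into a difference of squared distances to wstar, which telescopes
   when the one-step bounds are summed over t. *)

lemma convex_combination_le_inner:
  fixes v :: "'i \<Rightarrow> 'a::real_inner"
  assumes "\<And>i. i \<in> A \<Longrightarrow> lam i \<ge> 0"
    and "sum lam A = 1"
    and "\<And>i. i \<in> A \<Longrightarrow> x i \<le> inner (v i) d + c"
  shows "(\<Sum>i\<in>A. lam i * x i) \<le> inner (\<Sum>i\<in>A. lam i *\<^sub>R v i) d + c"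
proof -
  have "(\<Sum>i\<in>A. lam i * x i) \<le> (\<Sum>i\<in>A. lam i * (inner (v i) d + c))"
    by (rule sum_mono) (simp add: assms mult_left_mono)
  also have "\<dots> = inner (\<Sum>i\<in>A. lam i *\<^sub>R v i) d + sum lam A * c"
    by (simp add: distrib_left sum.distrib sum_distrib_right inner_sum_left)
  finally show ?thesis
    using assms(2) by simp
qed

lemma weighted_sum_diff_le_inner:
  fixes f :: "'i \<Rightarrow> 'a \<Rightarrow> real" and v :: "'i \<Rightarrow> 'b::real_inner"
  assumes "\<And>i. i \<in> A \<Longrightarrow> lam i \<ge> 0"
    and "sum lam A = 1"
    and "\<And>i. i \<in> A \<Longrightarrow> f i a - f i b \<le> inner (v i) d + c"
  shows "(\<Sum>i\<in>A. lam i * f i a) - (\<Sum>i\<in>A. lam i * f i b)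
    \<le> inner (\<Sum>i\<in>A. lam i *\<^sub>R v i) d + c"
proof -
  have "(\<Sum>i\<in>A. lam i * f i a) - (\<Sum>i\<in>A. lam i * f i b) = (\<Sum>i\<in>A. lam i * (f i a - f i b))"
    by (simp add: sum_subtractf right_diff_distrib)
  with convex_combination_le_inner[OF assms] show ?thesis
    by simp
qed

lemma two_inner_diff_eq:
  fixes a b :: "'a::real_inner"
  shows "2 * inner (a - b) b = (norm a)\<^sup>2 - (norm b)\<^sup>2 - (norm (b - a))\<^sup>2"
  by (simp add: power2_norm_eq_inner inner_diff_left inner_diff_right inner_commute)

lemma inexact_gradient_step_bound:
  fixes x y z G g :: "'a::real_inner" and F :: "'a \<Rightarrow> real"
  assumes smooth: "F y - F x \<le> inner G (y - x) + L / 2 * (norm (y - x))\<^sup>2"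
    and convex: "F x - F z \<le> inner G (x - z)"
    and step: "y = x - \<eta> *\<^sub>R g"
    and eta_pos: "\<eta> > 0"
  shows "F y - F z \<le> 1 / (2 * \<eta>) * ((norm (x - z))\<^sup>2 - (norm (y - z))\<^sup>2)
    + inner (G - g) (y - z) + 1 / 2 * (L - 1 / \<eta>) * (norm (y - x))\<^sup>2"
proof -
  have "2 * \<eta> * inner g (y - z) = 2 * inner ((x - z) - (y - z)) (y - z)"
    by (simp add: step)
  then have applied: "inner g (y - z)
      = 1 / (2 * \<eta>) * ((norm (x - z))\<^sup>2 - (norm (y - z))\<^sup>2 - (norm (y - x))\<^sup>2)"
    using two_inner_diff_eq[of "x - z" "y - z"] eta_pos by (simp add: field_simps)
  have "F y - F z \<le> inner G (y - z) + L / 2 * (norm (y - x))\<^sup>2"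
    using smooth convex by (simp add: inner_diff_right)
  also have "\<dots> = inner g (y - z) + inner (G - g) (y - z) + L / 2 * (norm (y - x))\<^sup>2"
    by (simp add: inner_diff_left)
  also have "\<dots> = 1 / (2 * \<eta>) * ((norm (x - z))\<^sup>2 - (norm (y - z))\<^sup>2)
    + inner (G - g) (y - z) + 1 / 2 * (L - 1 / \<eta>) * (norm (y - x))\<^sup>2"
    unfolding applied using eta_pos by (simp add: field_simps)
  finally show ?thesis .
qed

lemma sum_telescoping_le:
  fixes D E s r :: "nat \<Rightarrow> real"
  assumes "\<And>t. t \<ge> 1 \<Longrightarrow> D t \<le> a * (r t - r (t + 1)) + E t + c * s t"
  shows "(\<Sum>t=1..T. D t) \<le> a * (r 1 - r (T + 1)) + (\<Sum>t=1..T. E t) + c * (\<Sum>t=1..T. s t)"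
proof -
  have "(\<Sum>t=1..T. D t) \<le> (\<Sum>t=1..T. a * (r t - r (t + 1)) + E t + c * s t)"
    by (intro sum_mono assms) simp
  also have "\<dots> = a * (\<Sum>t=1..T. r t - r (Suc t)) + (\<Sum>t=1..T. E t) + c * (\<Sum>t=1..T. s t)"
    by (simp add: sum.distrib sum_distrib_left)
  also have "(\<Sum>t=1..T. r t - r (Suc t)) = r 1 - r (T + 1)"
    using sum_Suc_diff[of 1 T "\<lambda>t. - r t"] by simp
  finally show ?thesis .
qed

theorem lemma1:
  fixes N :: nat
    and fs :: "nat \<Rightarrow> 'a::euclidean_space \<Rightarrow> real"
    and grad :: "nat \<Rightarrow> 'a \<Rightarrow> 'a"
    and lam :: "nat \<Rightarrow> real"
    and L \<mu> \<eta> :: real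
    and w :: "nat \<Rightarrow> 'a"
    and wstar :: 'a
    and I :: "nat \<Rightarrow> nat set"
    and \<tau> :: "nat \<Rightarrow> nat \<Rightarrow> nat"
    and T :: nat
  assumes grad: "\<And>i x. i \<in> {1..N} \<Longrightarrow> GDERIV (fs i) x :> grad i x"
    and lam_nonneg: "\<And>i. i \<in> {1..N} \<Longrightarrow> lam i \<ge> 0"
    and lam_sum: "(\<Sum>i=1..N. lam i) = 1"
    and smooth: "\<And>i w1 w2. i \<in> {1..N} \<Longrightarrow>
        fs i w1 - fs i w2 \<le> inner (grad i w2) (w1 - w2) + L / 2 * (norm (w1 - w2))\<^sup>2"
    and convex: "\<And>i w1 w2. i \<in> {1..N} \<Longrightarrow>
        fs i w1 - fs i w2 \<ge> inner (grad i w2) (w1 - w2) + \<mu> / 2 * (norm (w1 - w2))\<^sup>2"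
    and mu_nonneg: "\<mu> \<ge> 0"
    and minimizer: "\<And>v. (\<Sum>i=1..N. lam i * fs i wstar) \<le> (\<Sum>i=1..N. lam i * fs i v)"
    and eta_pos: "\<eta> > 0"
    and I_sub: "\<And>t. I t \<subseteq> {1..N}"
    and delay: "\<And>i t. t \<ge> 1 \<Longrightarrow> t - \<tau> i t \<ge> 1 \<and> \<tau> i t \<le> t"
    and update: "\<And>t. t \<ge> 1 \<Longrightarrow>
        w (t + 1) = w t - \<eta> *\<^sub>R (\<Sum>i\<in>I t. lam i *\<^sub>R grad i (w (t - \<tau> i t)))"
    and T_pos: "T \<ge> 1"
  shows "(\<Sum>t=1..T. (\<Sum>i=1..N. lam i * fs i (w (t + 1))) - (\<Sum>i=1..N. lam i * fs i wstar))
    \<le> 1 / (2 * \<eta>) * ((norm (w 1 - wstar))\<^sup>2 - (norm (w (T + 1) - wstar))\<^sup>2)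
      + (\<Sum>t=1..T. inner ((\<Sum>i=1..N. lam i *\<^sub>R grad i (w t))
                           - (\<Sum>i\<in>I t. lam i *\<^sub>R grad i (w (t - \<tau> i t))))
                          (w (t + 1) - wstar))
      + 1 / 2 * (L - 1 / \<eta>) * (\<Sum>t=1..T. (norm (w (t + 1) - w t))\<^sup>2)"
proof -
  define F where "F v = (\<Sum>i=1..N. lam i * fs i v)" for v
  define G where "G v = (\<Sum>i=1..N. lam i *\<^sub>R grad i v)" for v
  have F_smooth: "F y - F x \<le> inner (G x) (y - x) + L / 2 * (norm (y - x))\<^sup>2" for x y
    unfolding F_def G_def
    by (rule weighted_sum_diff_le_inner[where f = fs and v = "\<lambda>i. grad i x",
          OF lam_nonneg lam_sum smooth])
  have fs_convex: "fs i x - fs i wstar \<le> inner (grad i x) (x - wstar) + 0" if "i \<in> {1..N}" for i x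
  proof -
    have "\<mu> / 2 * (norm (wstar - x))\<^sup>2 \<ge> 0"
      using mu_nonneg by simp
    with convex[OF that, of x wstar] show ?thesis
      by (simp add: inner_diff_right)
  qed
  have F_convex: "F x - F wstar \<le> inner (G x) (x - wstar)" for x
    using weighted_sum_diff_le_inner[where f = fs and v = "\<lambda>i. grad i x",
          OF lam_nonneg lam_sum fs_convex]
    unfolding F_def G_def by simp
  have step: "F (w (t + 1)) - F wstar
    \<le> 1 / (2 * \<eta>) * ((norm (w t - wstar))\<^sup>2 - (norm (w (t + 1) - wstar))\<^sup>2)
      + inner (G (w t) - (\<Sum>i\<in>I t. lam i *\<^sub>R grad i (w (t - \<tau> i t)))) (w (t + 1) - wstar)
      + 1 / 2 * (L - 1 / \<eta>) * (norm (w (t + 1) - w t))\<^sup>2" if "t \<ge> 1" for t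
    by (rule inexact_gradient_step_bound[OF F_smooth F_convex update[OF that] eta_pos])
  show ?thesis
    unfolding F_def[symmetric] G_def[symmetric] by (rule sum_telescoping_le) (rule step)
qed

end
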